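(* Let $K=\mathbb{F}_{p^h}$, $p$ prime, and let $\sigma:K\to K$, $k\mapsto k^{p^r}$, for some $r\in\{1,\dots,h-1\}$; let $n=h/\gcd(r,h)$ be the order of $\sigma$ and $q=p^{\gcd(r,h)}$, so that $\mathrm{Fix}(\sigma)\cong\mathbb{F}_q$. (i) If $n\in\{2,3\}$, then $f(t)=t^n-a\in K[t;\sigma]$ is irreducible if and only if $a\in K\setminus\mathrm{Fix}(\sigma)$. (ii) If $n$ is a prime and $n\mid(q-1)$, then $f(t)=t^n-a\in K[t;\sigma]$ is irreducible if and only if $a\in K\setminus\mathrm{Fix}(\sigma)$. In both cases (i) and (ii), there are precisely $p^h-q$ irreducible polynomials in $K[t;\sigma]$ of the form $t^n-a$ with $a\in K$.
   Context: $K[t;\sigma]$ is the skew polynomial ring over $K$ with $tk=\sigma(k)t$. $\mathrm{Fix}(\sigma)=\{k\in K:\sigma(k)=k\}$. A polynomial is irreducible if it is not a unit and has no factorization $f=gh$ with $\deg g,\deg h<\deg f$. *)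

theory Defs
  imports "HOL-Computational_Algebra.Computational_Algebra"
begin

text \<open>Skew polynomial ring K[t;sigma]: elements are represented by their coefficient
sequences (type 'a poly, coefficient i = coefficient of t^i); addition is the usual one,
and multiplication is determined by t k = sigma(k) t, i.e.
(a t^i)(b t^j) = a sigma^i(b) t^(i+j).\<close>

definition skew_mult :: "('a::comm_ring_1 \<Rightarrow> 'a) \<Rightarrow> 'a poly \<Rightarrow> 'a poly \<Rightarrow> 'a poly" where
  "skew_mult \<sigma> f g = (\<Sum>i\<le>degree f. monom (coeff f i) i * map_poly (\<sigma> ^^ i) g)"

definition skew_unit :: "('a::comm_ring_1 \<Rightarrow> 'a) \<Rightarrow> 'a poly \<Rightarrow> bool" where
  "skew_unit \<sigma> f \<longleftrightarrow> (\<exists>g. skew_mult \<sigma> f g = 1 \<and> skew_mult \<sigma> g f = 1)"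

definition skew_irreducible :: "('a::comm_ring_1 \<Rightarrow> 'a) \<Rightarrow> 'a poly \<Rightarrow> bool" where
  "skew_irreducible \<sigma> f \<longleftrightarrow> \<not> skew_unit \<sigma> f \<and>
     \<not> (\<exists>g h. f = skew_mult \<sigma> g h \<and> degree g < degree f \<and> degree h < degree f)"

definition Fix :: "('a \<Rightarrow> 'a) \<Rightarrow> 'a set" where
  "Fix \<sigma> = {k. \<sigma> k = k}"

end

theory Submission
  imports Defs "HOL-Number_Theory.Cong"
begin

text \<open>
  With \<tau> x = x ^ q one has \<sigma> = \<tau> ^^ k for some k coprime to n. Hence \<sigma> ^^ n = id, so t ^ n
  is central in K[t;\<sigma>], and Fix \<sigma> = Fix \<tau>, whose q elements are the roots of X ^ q - X, a divisor
  of X ^ (q ^ n) - X.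

  If \<sigma> a \<noteq> a, the \<sigma>-orbit of a has n elements because n is prime. Were t ^ n - a = g h with
  0 < deg h < n, the left ideal K[t;\<sigma>] h would contain t ^ n - a and hence, t ^ n being central, be
  closed under right multiplication by a. As u a - \<sigma>^i(a) u multiplies the j-th coefficient of u by
  \<sigma>^j(a) - \<sigma>^i(a), the coefficients of h can be removed one at a time down to a monomial c t^i,
  and then t^(n-i) c t^i \<equiv> \<sigma>^(n-i)(c) a modulo t ^ n - a puts a nonzero constant into an ideal whose
  nonzero elements have degree at least deg h.

  If \<sigma> a = a, then a = b \<sigma>(b) \<dots> \<sigma>^(n-1)(b) for some b, because the norm b \<mapsto> b ^ (1 + q + \<dots> + q^(n-1))
  maps K - {0} onto the (q - 1)-th roots of unity (count its fibres); then t ^ n - a has the right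
  factor t - b.
\<close>

section \<open>Iterates of a periodic map\<close>

lemma Fix_funpow_coprime:
  assumes per: "f ^^ n = id" and "coprime k n"
  shows "Fix (f ^^ k) = Fix f"
proof (intro set_eqI iffI)
  fix x assume "x \<in> Fix (f ^^ k)"
  obtain u where "[k * u = 1] (mod n)"
    using cong_solve_coprime_nat[OF \<open>coprime k n\<close>] by auto
  then have ku: "k * u mod n = 1 mod n"
    by (simp add: cong_def)
  have "((f ^^ k) ^^ u) x = x"
    using \<open>x \<in> Fix (f ^^ k)\<close> by (induction u) (simp_all add: Fix_def funpow_swap1)
  then have "(f ^^ (k * u mod n)) x = x"
    by (simp add: funpow_mult mult.commute funpow_mod_eq per)
  then show "x \<in> Fix f"
    using per ku by (cases "n = 1") (simp_all add: Fix_def)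
next
  fix x assume "x \<in> Fix f"
  then show "x \<in> Fix (f ^^ k)"
    by (induction k) (simp_all add: Fix_def)
qed

lemma inj_on_funpow_orbit_prime:
  assumes per: "f ^^ n = id" and "prime n" and "f a \<noteq> a"
  shows "inj_on (\<lambda>i. (f ^^ i) a) {..<n}"
proof -
  have False if "i < j" "j < n" and eq: "(f ^^ i) a = (f ^^ j) a" for i j
  proof -
    have "(f ^^ (j - i)) a = (f ^^ (j - i + n)) a"
      by (simp add: funpow_add per)
    also have "j - i + n = (n - i) + j"
      using that by simp
    also have "(f ^^ (n - i + j)) a = (f ^^ (n - i)) ((f ^^ i) a)"
      by (simp only: eq funpow_add comp_apply)
    also have "\<dots> = (f ^^ (n - i + i)) a"
      by (simp only: funpow_add comp_apply)
    finally have "a \<in> Fix (f ^^ (j - i))"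
      using that by (simp add: per Fix_def)
    moreover have "coprime n (j - i)"
      using that \<open>prime n\<close> by (intro prime_imp_coprime) (auto dest: dvd_imp_le)
    ultimately have "a \<in> Fix f"
      using Fix_funpow_coprime[OF per, of "j - i"] by (simp add: coprime_commute)
    with \<open>f a \<noteq> a\<close> show False
      by (simp add: Fix_def)
  qed
  then show ?thesis
    by (intro inj_onI) (metis lessThan_iff linorder_neqE_nat)
qed

lemma prod_funpow_coprime_reindex:
  fixes x :: "'a::comm_monoid_mult"
  assumes per: "f ^^ n = id" and "coprime k n"
  shows "(\<Prod>i<n. ((f ^^ k) ^^ i) x) = (\<Prod>i<n. (f ^^ i) x)"
proof -
  obtain u where u: "[k * u = 1] (mod n)"
    using cong_solve_coprime_nat[OF \<open>coprime k n\<close>] by auto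
  have "(\<Prod>i<n. ((f ^^ k) ^^ i) x) = (\<Prod>i<n. (f ^^ (k * i mod n)) x)"
    by (simp add: funpow_mult mult.commute funpow_mod_eq per)
  also have "\<dots> = (\<Prod>i<n. (f ^^ i) x)"
  proof (rule prod.reindex_bij_witness[where i = "\<lambda>j. u * j mod n" and j = "\<lambda>i. k * i mod n"])
    fix j assume "j \<in> {..<n}"
    have "[k * (u * j mod n) = (k * u) * j] (mod n)"
      by (simp add: cong_def mod_mult_right_eq mult.assoc)
    also have "[(k * u) * j = 1 * j] (mod n)"
      using u by (rule cong_mult) simp
    finally show "k * (u * j mod n) mod n = j"
      using \<open>j \<in> {..<n}\<close> by (simp add: cong_def)
  next
    fix i assume "i \<in> {..<n}"
    have "[u * (k * i mod n) = (k * u) * i] (mod n)"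
      by (simp add: cong_def mod_mult_right_eq mult.assoc mult.left_commute)
    also have "[(k * u) * i = 1 * i] (mod n)"
      using u by (rule cong_mult) simp
    finally show "u * (k * i mod n) mod n = i"
      using \<open>i \<in> {..<n}\<close> by (simp add: cong_def)
  qed auto
  finally show ?thesis .
qed

section \<open>Skew polynomials over a field endomorphism\<close>

lemma degree_monom_minus:
  assumes "degree p < n"
  shows "degree (monom 1 n - p :: 'a::comm_ring_1 poly) = n"
proof -
  have "degree (monom 1 n + - p :: 'a poly) = n"
    using assms by (subst degree_add_eq_left) (simp_all add: degree_monom_eq)
  then show ?thesis
    by simp
qed

lemma degree_monom_minus_const:
  assumes "0 < n"
  shows "degree (monom 1 n - [:a:] :: 'a::comm_ring_1 poly) = n"
  using assms by (simp add: degree_monom_minus)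

lemma card_monom_minus_const_set:
  "card {f. \<exists>a. f = monom 1 n - [:a:] \<and> P f} = card {a :: 'a::comm_ring_1. P (monom 1 n - [:a:])}"
proof -
  have "{f. \<exists>a. f = monom 1 n - [:a:] \<and> P f} = (\<lambda>a. monom 1 n - [:a:]) ` {a. P (monom 1 n - [:a:])}"
    by auto
  moreover have "inj (\<lambda>a :: 'a. monom 1 n - [:a:])"
    by (rule injI) simp
  ultimately show ?thesis
    by (simp add: card_image inj_on_subset)
qed

locale field_endo =
  fixes \<sigma> :: "'a::field \<Rightarrow> 'a"
  assumes endo_add: "\<sigma> (x + y) = \<sigma> x + \<sigma> y"
    and endo_mult: "\<sigma> (x * y) = \<sigma> x * \<sigma> y"
    and endo_one: "\<sigma> 1 = 1"
begin

lemma endo_0 [simp]: "\<sigma> 0 = 0"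
  using endo_add[of 0 0] by (metis add_cancel_right_right add_0)

lemma endo_eq_0_iff [simp]: "\<sigma> x = 0 \<longleftrightarrow> x = 0"
proof
  assume "\<sigma> x = 0"
  show "x = 0"
  proof (rule ccontr)
    assume "x \<noteq> 0"
    then have "\<sigma> (x * inverse x) = 1"
      by (simp add: endo_one)
    with \<open>\<sigma> x = 0\<close> show False
      by (simp add: endo_mult)
  qed
qed simp

lemma endo_minus: "\<sigma> (- x) = - \<sigma> x"
  using endo_add[of x "- x"] by (simp add: eq_neg_iff_add_eq_0 add.commute)

lemma endo_diff: "\<sigma> (x - y) = \<sigma> x - \<sigma> y"
  using endo_add[of x "- y"] by (simp add: endo_minus)

lemma endo_sum: "\<sigma> (\<Sum>j\<in>A. f j) = (\<Sum>j\<in>A. \<sigma> (f j))"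
  by (induction A rule: infinite_finite_induct) (simp_all add: endo_add)

lemma field_endo_funpow: "field_endo (\<sigma> ^^ i)"
  by (induction i) (simp_all add: field_endo_def endo_add endo_mult endo_one)

lemmas funpow_endo_0 [simp] = field_endo.endo_0[OF field_endo_funpow]
  and funpow_endo_one [simp] = field_endo.endo_one[OF field_endo_funpow]
  and funpow_endo_eq_0_iff [simp] = field_endo.endo_eq_0_iff[OF field_endo_funpow]
  and funpow_endo_mult = field_endo.endo_mult[OF field_endo_funpow]
  and funpow_endo_diff = field_endo.endo_diff[OF field_endo_funpow]
  and funpow_endo_sum = field_endo.endo_sum[OF field_endo_funpow]

abbreviation skew_times :: "'a poly \<Rightarrow> 'a poly \<Rightarrow> 'a poly" (infixl "\<star>" 70)
  where "f \<star> g \<equiv> skew_mult \<sigma> f g"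

lemma coeff_skew_mult: "coeff (f \<star> g) k = (\<Sum>i\<le>k. coeff f i * (\<sigma> ^^ i) (coeff g (k - i)))"
proof -
  have "coeff (f \<star> g) k = (\<Sum>i\<le>degree f. if i \<le> k then coeff f i * (\<sigma> ^^ i) (coeff g (k - i)) else 0)"
    unfolding skew_mult_def coeff_sum coeff_monom_mult by (intro sum.cong) (auto simp: coeff_map_poly)
  also have "\<dots> = (\<Sum>i\<le>k. if i \<le> degree f then coeff f i * (\<sigma> ^^ i) (coeff g (k - i)) else 0)"
    by (rule sum.mono_neutral_cong) (auto simp: coeff_eq_0)
  also have "\<dots> = (\<Sum>i\<le>k. coeff f i * (\<sigma> ^^ i) (coeff g (k - i)))"
    by (rule sum.cong) (auto simp: coeff_eq_0)
  finally show ?thesis .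
qed

lemma coeff_skew_mult_monom_left:
  "coeff (monom c m \<star> u) k = (if m \<le> k then c * (\<sigma> ^^ m) (coeff u (k - m)) else 0)"
proof -
  have "coeff (monom c m \<star> u) k = (\<Sum>i\<le>k. if i = m then c * (\<sigma> ^^ m) (coeff u (k - m)) else 0)"
    unfolding coeff_skew_mult by (intro sum.cong) (auto simp: coeff_monom)
  then show ?thesis
    by simp
qed

lemma coeff_skew_mult_monom_right:
  "coeff (u \<star> monom c m) k = (if m \<le> k then coeff u (k - m) * (\<sigma> ^^ (k - m)) c else 0)"
proof -
  have "coeff (u \<star> monom c m) k = (\<Sum>i\<le>k. if i = k - m \<and> m \<le> k then coeff u i * (\<sigma> ^^ i) c else 0)"
    unfolding coeff_skew_mult by (intro sum.cong) (auto simp: coeff_monom)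
  then show ?thesis
    by (simp add: sum.delta)
qed

lemma skew_mult_monom_left: "monom c m \<star> v = monom c m * map_poly (\<sigma> ^^ m) v"
  by (rule poly_eqI) (simp add: coeff_skew_mult_monom_left coeff_monom_mult coeff_map_poly)

lemma skew_mult_const_left: "[:c:] \<star> g = smult c g"
  by (rule poly_eqI) (simp add: coeff_skew_mult_monom_left flip: monom_0)

lemma coeff_skew_mult_const_right: "coeff (u \<star> [:c:]) k = coeff u k * (\<sigma> ^^ k) c"
  by (simp add: coeff_skew_mult_monom_right flip: monom_0)

lemma skew_mult_one_left [simp]: "1 \<star> g = g"
  using skew_mult_const_left[of 1 g] by (simp add: one_pCons)

lemma skew_mult_0_left [simp]: "0 \<star> g = 0"
  by (rule poly_eqI) (simp add: coeff_skew_mult)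

lemma skew_mult_0_right [simp]: "f \<star> 0 = 0"
  by (rule poly_eqI) (simp add: coeff_skew_mult)

lemma skew_mult_add_left: "(f + f') \<star> g = f \<star> g + f' \<star> g"
  by (rule poly_eqI) (simp add: coeff_skew_mult distrib_right sum.distrib)

lemma skew_mult_diff_left: "(f - f') \<star> g = f \<star> g - f' \<star> g"
  by (rule poly_eqI) (simp add: coeff_skew_mult left_diff_distrib sum_subtractf)

lemma skew_mult_diff_right: "f \<star> (g - g') = f \<star> g - f \<star> g'"
  by (rule poly_eqI) (simp add: coeff_skew_mult funpow_endo_diff right_diff_distrib sum_subtractf)

lemma skew_mult_sum_left: "(\<Sum>i\<in>A. F i) \<star> g = (\<Sum>i\<in>A. F i \<star> g)"
  by (induction A rule: infinite_finite_induct) (simp_all add: skew_mult_add_left)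

lemma coeff_skew_mult_degree:
  "coeff (f \<star> g) (degree f + degree g) = lead_coeff f * (\<sigma> ^^ degree f) (lead_coeff g)"
proof -
  have "coeff f i * (\<sigma> ^^ i) (coeff g (degree f + degree g - i)) = 0" if "i \<noteq> degree f" for i
    using that by (cases "i < degree f") (simp_all add: coeff_eq_0)
  then show ?thesis
    unfolding coeff_skew_mult by (subst sum.remove[of _ "degree f"]) (simp_all add: sum.neutral)
qed

lemma degree_skew_mult_le: "degree (f \<star> g) \<le> degree f + degree g"
proof (rule degree_le, intro allI impI)
  fix k assume "degree f + degree g < k"
  then have "coeff f i * (\<sigma> ^^ i) (coeff g (k - i)) = 0" for i
    by (cases "degree f < i") (simp_all add: coeff_eq_0)
  then show "coeff (f \<star> g) k = 0"
    unfolding coeff_skew_mult by (intro sum.neutral) blast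
qed

lemma degree_skew_mult:
  assumes "f \<noteq> 0" and "g \<noteq> 0"
  shows "degree (f \<star> g) = degree f + degree g"
  using assms coeff_skew_mult_degree[of f g]
  by (intro antisym degree_skew_mult_le le_degree) simp

lemma skew_mult_assoc_monom: "(monom c i \<star> g) \<star> h = monom c i \<star> (g \<star> h)"
proof (rule poly_eqI)
  fix k
  show "coeff ((monom c i \<star> g) \<star> h) k = coeff (monom c i \<star> (g \<star> h)) k"
  proof (cases "i \<le> k")
    case True
    have "coeff ((monom c i \<star> g) \<star> h) k =
      (\<Sum>j\<le>k. (if i \<le> j then c * (\<sigma> ^^ i) (coeff g (j - i)) else 0) * (\<sigma> ^^ j) (coeff h (k - j)))"
      by (simp only: coeff_skew_mult[of "monom c i \<star> g"] coeff_skew_mult_monom_left)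
    also have "\<dots> = (\<Sum>j\<in>{i..k}. c * (\<sigma> ^^ i) (coeff g (j - i)) * (\<sigma> ^^ j) (coeff h (k - j)))"
      by (rule sum.mono_neutral_cong_right) auto
    also have "\<dots> = (\<Sum>l\<le>k - i. c * (\<sigma> ^^ i) (coeff g l) * (\<sigma> ^^ (i + l)) (coeff h (k - i - l)))"
      by (rule sum.reindex_bij_witness[where i = "\<lambda>l. l + i" and j = "\<lambda>j. j - i"])
         (use True in \<open>auto simp: add.commute\<close>)
    also have "\<dots> = c * (\<sigma> ^^ i) (\<Sum>l\<le>k - i. coeff g l * (\<sigma> ^^ l) (coeff h (k - i - l)))"
      by (simp add: funpow_endo_sum funpow_endo_mult funpow_add sum_distrib_left mult.assoc)
    also have "\<dots> = coeff (monom c i \<star> (g \<star> h)) k"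
      using True by (simp add: coeff_skew_mult_monom_left coeff_skew_mult[of g h])
    finally show ?thesis .
  qed (simp add: coeff_skew_mult coeff_skew_mult_monom_left)
qed

lemma skew_mult_assoc: "(f \<star> g) \<star> h = f \<star> (g \<star> h)"
proof -
  have split: "u \<star> v = (\<Sum>i\<le>degree u. monom (coeff u i) i \<star> v)" for u v
    by (simp add: skew_mult_def[of _ u] skew_mult_monom_left)
  show ?thesis
    by (simp add: split[of f] skew_mult_sum_left skew_mult_assoc_monom)
qed

lemma skew_mult_monom_commute:
  assumes "\<sigma> ^^ n = id"
  shows "monom 1 n \<star> u = u \<star> monom 1 n"
  by (rule poly_eqI) (simp add: coeff_skew_mult_monom_left coeff_skew_mult_monom_right assms)

lemma coeff_skew_mult_const_commutator:
  "coeff (u \<star> [:a:] - [:(\<sigma> ^^ i) a:] \<star> u) k = coeff u k * ((\<sigma> ^^ k) a - (\<sigma> ^^ i) a)"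
  by (simp add: coeff_skew_mult_const_right skew_mult_const_left algebra_simps)

lemma skew_mult_monom_mod_monom_minus_const:
  assumes "i < n"
  shows "monom 1 (n - i) \<star> monom c i - [:(\<sigma> ^^ (n - i)) c:] \<star> (monom 1 n - [:a:]) =
    [:(\<sigma> ^^ (n - i)) c * a:]"
  using assms
  by (intro poly_eqI)
     (auto simp: coeff_skew_mult_monom_left skew_mult_const_left coeff_monom coeff_pCons split: nat.split)

definition skew_left_ideal :: "'a poly set \<Rightarrow> bool" where
  "skew_left_ideal I \<longleftrightarrow> (\<forall>s u. u \<in> I \<longrightarrow> s \<star> u \<in> I) \<and> (\<forall>u v. u \<in> I \<longrightarrow> v \<in> I \<longrightarrow> u - v \<in> I)"

lemma skew_left_ideal_principal: "skew_left_ideal {s \<star> h |s. True}"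
  unfolding skew_left_ideal_def by (auto simp flip: skew_mult_assoc skew_mult_diff_left)

lemma skew_left_ideal_mult: "skew_left_ideal I \<Longrightarrow> u \<in> I \<Longrightarrow> s \<star> u \<in> I"
  by (simp add: skew_left_ideal_def)

lemma skew_left_ideal_diff: "skew_left_ideal I \<Longrightarrow> u \<in> I \<Longrightarrow> v \<in> I \<Longrightarrow> u - v \<in> I"
  by (simp add: skew_left_ideal_def)

lemma skew_left_ideal_mult_const_right:
  assumes "\<sigma> ^^ n = id" and I: "skew_left_ideal I" and f: "\<And>s. s \<star> (monom 1 n - [:a:]) \<in> I"
    and "u \<in> I"
  shows "u \<star> [:a:] \<in> I"
proof -
  have "u \<star> [:a:] = monom 1 n \<star> u - u \<star> (monom 1 n - [:a:])"
    by (simp add: skew_mult_diff_right skew_mult_monom_commute[OF assms(1)])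
  then show ?thesis
    using skew_left_ideal_diff[OF I skew_left_ideal_mult[OF I \<open>u \<in> I\<close>] f] by metis
qed

lemma skew_const_commutator_shrinks_support:
  assumes orbit: "inj_on (\<lambda>i. (\<sigma> ^^ i) a) {..<n}" and "degree u < n"
    and "coeff u j \<noteq> 0" and "j \<noteq> degree u"
  defines "w \<equiv> u \<star> [:a:] - [:(\<sigma> ^^ degree u) a:] \<star> u"
  shows "w \<noteq> 0" and "degree w < n" and "card {k. coeff w k \<noteq> 0} < card {k. coeff u k \<noteq> 0}"
proof -
  have coeff_w: "coeff w k = coeff u k * ((\<sigma> ^^ k) a - (\<sigma> ^^ degree u) a)" for k
    unfolding w_def by (rule coeff_skew_mult_const_commutator)
  have "j < n"
    using assms(2,3) le_degree[of u j] by simp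
  then have "coeff w j \<noteq> 0"
    using assms(2-4) orbit by (auto simp: coeff_w dest: inj_onD)
  then show "w \<noteq> 0"
    by auto
  show "degree w < n"
    using assms(2) by (intro le_less_trans[OF degree_le]) (auto simp: coeff_w coeff_eq_0)
  have "finite {k. coeff u k \<noteq> 0}"
    by (rule finite_subset[of _ "{..degree u}"]) (auto intro: le_degree)
  moreover have "{k. coeff w k \<noteq> 0} \<subseteq> {k. coeff u k \<noteq> 0} - {degree u}"
    by (auto simp: coeff_w)
  moreover have "coeff u (degree u) \<noteq> 0"
    using assms(3) by auto
  ultimately show "card {k. coeff w k \<noteq> 0} < card {k. coeff u k \<noteq> 0}"
    by (intro psubset_card_mono) auto
qed

lemma skew_left_ideal_has_const:
  assumes per: "\<sigma> ^^ n = id" and orbit: "inj_on (\<lambda>i. (\<sigma> ^^ i) a) {..<n}" and "a \<noteq> 0"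
    and I: "skew_left_ideal I" and f: "\<And>s. s \<star> (monom 1 n - [:a:]) \<in> I"
    and "u \<in> I" and "u \<noteq> 0" and "degree u < n"
  shows "\<exists>e. e \<noteq> 0 \<and> [:e:] \<in> I"
  using \<open>u \<in> I\<close> \<open>u \<noteq> 0\<close> \<open>degree u < n\<close>
proof (induction "card {k. coeff u k \<noteq> 0}" arbitrary: u rule: less_induct)
  case less
  define i where "i = degree u"
  show ?case
  proof (cases "\<exists>j. j \<noteq> i \<and> coeff u j \<noteq> 0")
    case False
    then have u: "u = monom (coeff u i) i"
      by (intro poly_eqI) (auto simp: coeff_monom)
    have "i < n"
      using less.prems(3) by (simp add: i_def)
    then have "[:(\<sigma> ^^ (n - i)) (coeff u i) * a:] \<in> I"
      using skew_left_ideal_diff[OF I skew_left_ideal_mult[OF I less.prems(1)] f] u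
      by (metis skew_mult_monom_mod_monom_minus_const)
    moreover have "(\<sigma> ^^ (n - i)) (coeff u i) * a \<noteq> 0"
      using \<open>u \<noteq> 0\<close> \<open>a \<noteq> 0\<close> by (simp add: i_def)
    ultimately show ?thesis
      by blast
  next
    case True
    then obtain j where "j \<noteq> degree u" and "coeff u j \<noteq> 0"
      by (auto simp: i_def)
    moreover have "u \<star> [:a:] - [:(\<sigma> ^^ degree u) a:] \<star> u \<in> I"
      using less.prems(1) by (intro skew_left_ideal_diff[OF I] skew_left_ideal_mult[OF I]
          skew_left_ideal_mult_const_right[OF per I f])
    ultimately show ?thesis
      using less.hyps skew_const_commutator_shrinks_support[OF orbit less.prems(3)] by blast
  qed
qed

lemma not_skew_unit_if_degree_pos:
  assumes "0 < degree f"
  shows "\<not> skew_unit \<sigma> f"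
proof
  assume "skew_unit \<sigma> f"
  then obtain g where g: "f \<star> g = 1"
    by (auto simp: skew_unit_def)
  then have "f \<noteq> 0" "g \<noteq> 0"
    by auto
  then have "degree (f \<star> g) = degree f + degree g"
    by (rule degree_skew_mult)
  with g assms show False
    by simp
qed

lemma skew_irreducible_monom_minus_const:
  assumes per: "\<sigma> ^^ n = id" and orbit: "inj_on (\<lambda>i. (\<sigma> ^^ i) a) {..<n}" and "a \<noteq> 0"
    and "0 < n"
  shows "skew_irreducible \<sigma> (monom 1 n - [:a:])"
proof -
  define f where "f = monom 1 n - [:a:]"
  have deg_f: "degree f = n"
    unfolding f_def using \<open>0 < n\<close> by (rule degree_monom_minus_const)
  then have "f \<noteq> 0"
    using \<open>0 < n\<close> by auto
  have "\<not> skew_unit \<sigma> f"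
    using \<open>0 < n\<close> deg_f by (intro not_skew_unit_if_degree_pos) simp
  moreover have False if fac: "f = G \<star> H" and "degree G < n" and "degree H < n" for G H
  proof -
    have "G \<noteq> 0" "H \<noteq> 0"
      using fac \<open>f \<noteq> 0\<close> by auto
    then have "0 < degree H"
      using fac deg_f degree_skew_mult \<open>degree G < n\<close> by auto
    define I where "I = {s \<star> H |s. True}"
    have "s \<star> f \<in> I" for s
      unfolding I_def fac by (auto simp flip: skew_mult_assoc)
    moreover have "H \<in> I"
      unfolding I_def by (auto intro: exI[of _ 1])
    ultimately obtain e where "e \<noteq> 0" and "[:e:] \<in> I"
      using skew_left_ideal_has_const[OF per orbit \<open>a \<noteq> 0\<close>] skew_left_ideal_principal
        \<open>H \<noteq> 0\<close> \<open>degree H < n\<close> unfolding I_def f_def by blast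
    then obtain s where s: "[:e:] = s \<star> H"
      by (auto simp: I_def)
    then have "s \<noteq> 0"
      using \<open>e \<noteq> 0\<close> by auto
    have "degree (s \<star> H) = 0"
      by (simp flip: s)
    with \<open>0 < degree H\<close> show False
      using degree_skew_mult[OF \<open>s \<noteq> 0\<close> \<open>H \<noteq> 0\<close>] by simp
  qed
  ultimately show ?thesis
    unfolding skew_irreducible_def f_def[symmetric] deg_f by blast
qed

lemma monom_minus_norm_factor:
  assumes "0 < n"
  shows "monom 1 n - [:\<Prod>i<n. (\<sigma> ^^ i) b:] =
    (\<Sum>j<n. monom (\<Prod>i\<in>{Suc j..<n}. (\<sigma> ^^ i) b) j) \<star> (monom 1 1 - [:b:])"
    (is "_ = ?g \<star> _")
proof (rule poly_eqI)
  fix k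
  define d where "d j = (\<Prod>i\<in>{Suc j..<n}. (\<sigma> ^^ i) b)" for j
  have coeff_g: "coeff ?g j = (if j < n then d j else 0)" for j
    by (simp add: coeff_sum coeff_monom d_def)
  have d_Suc: "d j = (\<sigma> ^^ Suc j) b * d (Suc j)" if "Suc j < n" for j
    unfolding d_def using that by (simp add: prod.atLeast_Suc_lessThan)
  have norm: "(\<Prod>i<n. (\<sigma> ^^ i) b) = b * d 0"
    unfolding d_def using assms by (simp add: prod.atLeast_Suc_lessThan flip: atLeast0LessThan)
  have "coeff (?g \<star> (monom 1 1 - [:b:])) k =
    (if 1 \<le> k then coeff ?g (k - 1) else 0) - coeff ?g k * (\<sigma> ^^ k) b"
    by (simp add: skew_mult_diff_right coeff_skew_mult_monom_right coeff_skew_mult_const_right)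
  also have "\<dots> = coeff (monom 1 n - [:\<Prod>i<n. (\<sigma> ^^ i) b:]) k"
  proof -
    consider "k = 0" | "0 < k" "k < n" | "k = n" | "n < k"
      by linarith
    then show ?thesis
    proof cases
      case 2
      then show ?thesis
        using d_Suc[of "k - 1"] by (simp add: coeff_g coeff_monom coeff_pCons mult.commute split: nat.split)
    next
      case 3
      then show ?thesis
        using assms by (simp add: coeff_g d_def coeff_pCons split: nat.split)
    qed (use assms in \<open>simp_all add: coeff_g norm coeff_monom coeff_pCons split: nat.split\<close>)
  qed
  finally show "coeff (monom 1 n - [:\<Prod>i<n. (\<sigma> ^^ i) b:]) k = coeff (?g \<star> (monom 1 1 - [:b:])) k"
    by simp
qed

lemma not_skew_irreducible_monom_minus_norm:
  assumes "2 \<le> n"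
  shows "\<not> skew_irreducible \<sigma> (monom 1 n - [:\<Prod>i<n. (\<sigma> ^^ i) b:])"
proof -
  let ?g = "\<Sum>j<n. monom (\<Prod>i\<in>{Suc j..<n}. (\<sigma> ^^ i) b) j"
  have "degree ?g < n"
    using assms by (intro le_less_trans[OF degree_le, of "n - 1"]) (auto simp: coeff_sum coeff_monom)
  moreover have "degree (monom 1 1 - [:b:]) < n"
    using assms by (simp add: degree_monom_minus_const)
  moreover have "degree (monom 1 n - [:\<Prod>i<n. (\<sigma> ^^ i) b:]) = n"
    using assms by (simp add: degree_monom_minus_const)
  ultimately show ?thesis
    using monom_minus_norm_factor[of n b] assms unfolding skew_irreducible_def by fastforce
qed

lemma skew_irreducible_monom_minus_const_iff:
  assumes per: "\<sigma> ^^ n = id" and "prime n"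
    and norm_onto: "\<And>a. a \<in> Fix \<sigma> \<Longrightarrow> \<exists>b. (\<Prod>i<n. (\<sigma> ^^ i) b) = a"
  shows "skew_irreducible \<sigma> (monom 1 n - [:a:]) \<longleftrightarrow> a \<notin> Fix \<sigma>"
proof
  assume "skew_irreducible \<sigma> (monom 1 n - [:a:])"
  then show "a \<notin> Fix \<sigma>"
    using norm_onto not_skew_irreducible_monom_minus_norm \<open>prime n\<close> prime_ge_2_nat by metis
next
  assume "a \<notin> Fix \<sigma>"
  then have "\<sigma> a \<noteq> a" "a \<noteq> 0"
    by (auto simp: Fix_def)
  then show "skew_irreducible \<sigma> (monom 1 n - [:a:])"
    using skew_irreducible_monom_minus_const[OF per inj_on_funpow_orbit_prime[OF per \<open>prime n\<close>]]
      prime_gt_0_nat[OF \<open>prime n\<close>] by blast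
qed

end

section \<open>Finite fields\<close>

lemma of_nat_card_UNIV_eq_0: "of_nat (card (UNIV :: 'a::{ring_1,finite} set)) = (0 :: 'a)"
proof -
  have "(\<Sum>y\<in>UNIV. 1 + y) = (\<Sum>y\<in>UNIV. y :: 'a)"
    by (rule sum.reindex_bij_witness[of _ "\<lambda>y. y - 1" "\<lambda>y. 1 + y"]) auto
  then show ?thesis
    by (simp add: sum.distrib)
qed

lemma CHAR_eq_if_card_eq_prime_power:
  assumes "prime p" and "card (UNIV :: 'a::{field,finite} set) = p ^ h"
  shows "CHAR('a) = p"
proof -
  have "prime CHAR('a)"
    by (intro prime_CHAR_semidom finite_imp_CHAR_pos) simp
  moreover have "CHAR('a) dvd p ^ h"
    using of_nat_card_UNIV_eq_0[where 'a = 'a] unfolding assms(2) of_nat_eq_0_iff_char_dvd .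
  ultimately show ?thesis
    using assms(1) by (metis prime_dvd_power primes_dvd_imp_eq)
qed

lemma field_endo_power_CHAR:
  assumes "prime CHAR('a::field)"
  shows "field_endo (\<lambda>x :: 'a. x ^ (CHAR('a) ^ r))"
  by unfold_locales (simp_all add: freshmans_dream'[OF assms] power_mult_distrib)

lemma two_le_card_UNIV: "2 \<le> card (UNIV :: 'a::{field,finite} set)"
  using card_mono[of UNIV "{0, 1 :: 'a}"] by simp

lemma power_card_UNIV_eq_self:
  fixes x :: "'a::{field,finite}"
  shows "x ^ card (UNIV :: 'a set) = x"
proof (cases "x = 0")
  case False
  let ?U = "UNIV - {0 :: 'a}"
  have "(\<Prod>y\<in>?U. x * y) = \<Prod>?U"
    by (rule prod.reindex_bij_witness[of _ "\<lambda>y. y / x" "\<lambda>y. x * y"]) (use False in auto)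
  then have "x ^ card ?U * \<Prod>?U = \<Prod>?U"
    by (simp add: prod.distrib)
  then have "x ^ card ?U = 1"
    by simp
  moreover have "card (UNIV :: 'a set) = Suc (card ?U)"
    using card_Suc_Diff1[of UNIV "0 :: 'a"] by simp
  ultimately show ?thesis
    by (simp only: power_Suc2 mult_1_left)
qed (simp add: finite_UNIV_card_ge_0)

lemma funpow_power_eq:
  fixes x :: "'a::monoid_mult"
  shows "((\<lambda>x. x ^ m) ^^ i) x = x ^ (m ^ i)"
proof (induction i)
  case (Suc i)
  have "x ^ (m ^ Suc i) = (x ^ (m ^ i)) ^ m"
    by (simp only: power_Suc2 power_mult)
  then show ?case
    using Suc by simp
qed simp

lemma funpow_power_card_eq_id:
  assumes "card (UNIV :: 'a::{field,finite} set) = q ^ n"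
  shows "(\<lambda>x :: 'a. x ^ q) ^^ n = id"
  unfolding fun_eq_iff funpow_power_eq id_apply assms[symmetric] by (simp add: power_card_UNIV_eq_self)

lemma card_power_eq_le:
  assumes "0 < k"
  shows "card {b :: 'a::idom. b ^ k = z} \<le> k"
proof -
  have "{b. b ^ k = z} = {b. poly (monom 1 k - [:z:]) b = 0}"
    by (simp add: poly_monom)
  moreover have "monom 1 k - [:z:] \<noteq> (0 :: 'a poly)" "degree (monom 1 k - [:z:] :: 'a poly) = k"
    using degree_monom_minus_const[OF assms, of z] assms by auto
  ultimately show ?thesis
    using card_poly_roots_bound[of "monom 1 k - [:z:]"] by simp
qed

lemma card_roots_eq_degree_if_dvd:
  fixes P :: "'a::{field,finite} poly"
  assumes "P dvd monom 1 (card (UNIV :: 'a set)) - monom 1 1"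
  shows "card {x. poly P x = 0} = degree P"
proof -
  define Q where "Q = card (UNIV :: 'a set)"
  obtain R where PR: "monom 1 Q - monom 1 1 = P * R"
    using assms by (auto simp: Q_def elim: dvdE)
  have deg: "degree (monom 1 Q - monom 1 1 :: 'a poly) = Q"
    using two_le_card_UNIV[where 'a = 'a] by (intro degree_monom_minus) (simp add: Q_def degree_monom_eq)
  then have "P \<noteq> 0" "R \<noteq> 0"
    using two_le_card_UNIV[where 'a = 'a] PR by (auto simp: Q_def)
  then have Q: "Q = degree P + degree R"
    using deg PR by (simp add: degree_mult_eq)
  have "poly P x = 0 \<or> poly R x = 0" for x
    using arg_cong[OF PR, of "\<lambda>F. poly F x"] power_card_UNIV_eq_self[of x]
    by (simp add: poly_monom Q_def)
  then have "UNIV = {x. poly P x = 0} \<union> {x. poly R x = 0}"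
    by auto
  then have "Q \<le> card {x. poly P x = 0} + card {x. poly R x = 0}"
    unfolding Q_def by (metis card_Un_le)
  moreover have "card {x. poly R x = 0} \<le> degree R" "card {x. poly P x = 0} \<le> degree P"
    using card_poly_roots_bound \<open>P \<noteq> 0\<close> \<open>R \<noteq> 0\<close> by auto
  ultimately show ?thesis
    using Q by linarith
qed

lemma X_power_minus_X_dvd:
  assumes "prime CHAR('a::comm_ring_1)" and "q = CHAR('a) ^ g"
  shows "(monom 1 q - monom 1 1 :: 'a poly) dvd monom 1 (q ^ n) - monom 1 1"
proof (induction n)
  case (Suc n)
  let ?X = "monom 1 1 :: 'a poly"
  have "monom 1 (q ^ Suc n) = (monom 1 (q ^ n) :: 'a poly) ^ q"
    by (simp only: monom_power power_one power_Suc2)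
  also have "\<dots> = (monom 1 (q ^ n) - ?X + ?X) ^ q"
    by simp
  also have "\<dots> = (monom 1 (q ^ n) - ?X) ^ q + ?X ^ q"
    by (rule freshmans_dream') (use assms in simp_all)
  also have "?X ^ q = monom 1 q"
    by (simp add: monom_power)
  finally have step: "monom 1 (q ^ Suc n) - ?X = (monom 1 (q ^ n) - ?X) ^ q + (monom 1 q - ?X)"
    by (simp add: algebra_simps)
  have "0 < q"
    using assms by (simp add: prime_gt_0_nat)
  then have "monom 1 q - ?X dvd (monom 1 (q ^ n) - ?X) ^ q"
    using Suc.IH by (simp add: dvd_power dvd_trans)
  then show ?case
    unfolding step by (simp add: dvd_add)
qed simp

lemma card_fixed_power_CHAR:
  assumes "card (UNIV :: 'a::{field,finite} set) = q ^ n" and "q = CHAR('a) ^ g"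
  shows "card {x :: 'a. x ^ q = x} = q"
proof -
  have "prime CHAR('a)"
    by (intro prime_CHAR_semidom finite_imp_CHAR_pos) simp
  have "q \<noteq> 1"
    using assms(1) two_le_card_UNIV[where 'a = 'a] by auto
  moreover have "q \<noteq> 0"
    using assms(2) \<open>prime CHAR('a)\<close> by (simp add: prime_gt_0_nat)
  ultimately have "degree (monom 1 q - monom 1 1 :: 'a poly) = q"
    by (intro degree_monom_minus) (simp add: degree_monom_eq)
  moreover have "{x :: 'a. x ^ q = x} = {x. poly (monom 1 q - monom 1 1) x = 0}"
    by (simp add: poly_monom)
  ultimately show ?thesis
    using card_roots_eq_degree_if_dvd X_power_minus_X_dvd[OF \<open>prime CHAR('a)\<close> assms(2)] assms(1)
    by metis
qed

lemma geometric_sum_nat: "(\<Sum>i<n. q ^ i) * (q - 1) = q ^ n - (1::nat)"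
proof (cases "q = 0")
  case False
  have "int ((\<Sum>i<n. q ^ i) * (q - 1)) = int q ^ n - 1"
    using power_diff_1_eq[of "int q" n] False by (simp add: of_nat_diff mult.commute)
  also have "\<dots> = int (q ^ n - 1)"
    using False by (simp add: of_nat_diff)
  finally show ?thesis
    by (rule of_nat_eq_iff[THEN iffD1])
qed (cases n; simp add: lessThan_Suc_eq_insert_0 sum.reindex)

lemma power_onto_roots_of_unity:
  fixes y :: "'a::{field,finite}"
  assumes km: "k * m = card (UNIV :: 'a set) - 1" and "y ^ m = 1"
  shows "\<exists>b. b ^ k = y"
proof -
  let ?U = "UNIV - {0 :: 'a}"
  let ?img = "(\<lambda>b. b ^ k) ` ?U"
  have card_UNIV: "card (UNIV :: 'a set) = Suc (k * m)"
    using km two_le_card_UNIV[where 'a = 'a] by linarith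
  then have "0 < k" "0 < m"
    using km two_le_card_UNIV[where 'a = 'a] by (auto intro: gr0I)
  have sub: "?img \<subseteq> {z. z ^ m = 1}"
  proof
    fix z assume "z \<in> ?img"
    then obtain b where "b \<noteq> 0" "z = b ^ k"
      by auto
    moreover have "b ^ (k * m) * b = b"
      using power_card_UNIV_eq_self[of b] unfolding card_UNIV power_Suc2 .
    ultimately show "z \<in> {z. z ^ m = 1}"
      by (simp add: power_mult)
  qed
  have "?U \<subseteq> (\<Union>z\<in>?img. {b. b ^ k = z})"
    by auto
  then have "card ?U \<le> (\<Sum>z\<in>?img. card {b. b ^ k = z})"
    by (intro order_trans[OF card_mono card_UN_le]) auto
  also have "\<dots> \<le> card ?img * k"
    by (rule sum_bounded_above[where K = k, THEN order_trans])
       (simp_all add: card_power_eq_le[OF \<open>0 < k\<close>])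
  finally have "m \<le> card ?img"
    using card_UNIV \<open>0 < k\<close> by (simp add: card_Diff_singleton mult.commute)
  then have "card {z :: 'a. z ^ m = 1} \<le> card ?img"
    using card_power_eq_le[OF \<open>0 < m\<close>, of "1 :: 'a"] by linarith
  then have "?img = {z. z ^ m = 1}"
    using card_mono[OF _ sub] by (intro card_subset_eq[OF _ sub]) auto
  with \<open>y ^ m = 1\<close> have "y \<in> ?img"
    by simp
  then show ?thesis
    by blast
qed

lemma frobenius_norm_surj:
  fixes y :: "'a::{field,finite}"
  assumes card: "card (UNIV :: 'a set) = q ^ n" and "y ^ q = y"
  shows "\<exists>b. (\<Prod>i<n. ((\<lambda>x. x ^ q) ^^ i) b) = y"
proof -
  have "0 < n" "0 < q"
    using card two_le_card_UNIV[where 'a = 'a] by (auto intro!: gr0I simp: power_0_left split: if_splits)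
  define E where "E = (\<Sum>i<n. q ^ i)"
  have norm: "(\<Prod>i<n. ((\<lambda>x. x ^ q) ^^ i) b) = b ^ E" for b :: 'a
    by (simp add: E_def funpow_power_eq power_sum)
  show ?thesis
  proof (cases "y = 0")
    case True
    have "0 < E"
      using \<open>0 < n\<close> unfolding E_def by (intro sum_pos2[of _ 0]) auto
    with True show ?thesis
      by (auto simp: norm)
  next
    case False
    have "y ^ (q - 1) * y = 1 * y"
      using \<open>y ^ q = y\<close> \<open>0 < q\<close> by (simp flip: power_Suc2)
    then have "y ^ (q - 1) = 1"
      using False by simp
    moreover have "E * (q - 1) = card (UNIV :: 'a set) - 1"
      unfolding E_def card by (rule geometric_sum_nat)
    ultimately show ?thesis
      using power_onto_roots_of_unity by (metis norm)
  qed
qed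

lemma Fix_funpow_frobenius:
  assumes "card (UNIV :: 'a::{field,finite} set) = q ^ n" and "coprime k n"
  shows "Fix ((\<lambda>x :: 'a. x ^ q) ^^ k) = {x. x ^ q = x}"
  using Fix_funpow_coprime[OF funpow_power_card_eq_id[OF assms(1)] assms(2)] by (simp add: Fix_def)

lemma funpow_frobenius_norm_onto:
  assumes "card (UNIV :: 'a::{field,finite} set) = q ^ n" and "coprime k n"
    and "a \<in> Fix ((\<lambda>x :: 'a. x ^ q) ^^ k)"
  shows "\<exists>b. (\<Prod>i<n. (((\<lambda>x. x ^ q) ^^ k) ^^ i) b) = a"
  using frobenius_norm_surj[OF assms(1)] assms(3) Fix_funpow_frobenius[OF assms(1,2)]
  by (simp add: prod_funpow_coprime_reindex[OF funpow_power_card_eq_id[OF assms(1)] assms(2)])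

theorem mainTheorem17:
  fixes p h r n q :: nat and \<sigma> :: "'a::{field,finite} \<Rightarrow> 'a"
  assumes "prime p"
    and "card (UNIV :: 'a set) = p ^ h"
    and "1 \<le> r" and "r \<le> h - 1"
    and "\<sigma> = (\<lambda>k. k ^ (p ^ r))"
    and "n = h div gcd r h"
    and "q = p ^ gcd r h"
    and "n \<in> {2, 3} \<or> (prime n \<and> n dvd (q - 1))"
  shows "(\<forall>a::'a. skew_irreducible \<sigma> (monom 1 n - [:a:]) \<longleftrightarrow> a \<in> UNIV - Fix \<sigma>)
     \<and> card {f. \<exists>a::'a. f = monom 1 n - [:a:] \<and> skew_irreducible \<sigma> f} = p ^ h - q"
proof -
  note card = assms(2) and \<sigma> = assms(5) and n = assms(6) and q = assms(7)
  define k where "k = r div gcd r h"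
  have CHAR: "CHAR('a) = p"
    using assms(1) card by (rule CHAR_eq_if_card_eq_prime_power)
  have card_q: "card (UNIV :: 'a set) = q ^ n"
    using card by (simp add: n q flip: power_mult)
  have "coprime k n"
    unfolding k_def n using assms(3) by (intro div_gcd_coprime) simp
  have \<sigma>_funpow: "\<sigma> = (\<lambda>x. x ^ q) ^^ k"
    by (simp add: fun_eq_iff \<sigma> k_def q funpow_power_eq flip: power_mult)
  have "prime (3 :: nat)"
    unfolding prime_nat_iff' by (auto simp: numeral_3_eq_3 less_Suc_eq) presburger
  then have "prime n"
    using assms(8) by auto
  have per: "\<sigma> ^^ n = id"
    using funpow_power_card_eq_id[OF card_q] by (metis \<sigma>_funpow funpow_mult mult.commute id_funpow)
  interpret field_endo \<sigma>
    using field_endo_power_CHAR[where 'a = 'a, of r] assms(1) by (simp add: \<sigma> CHAR)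
  have irreducible_iff: "skew_irreducible \<sigma> (monom 1 n - [:a:]) \<longleftrightarrow> a \<notin> Fix \<sigma>" for a
    using skew_irreducible_monom_minus_const_iff[OF per \<open>prime n\<close>]
      funpow_frobenius_norm_onto[OF card_q \<open>coprime k n\<close>] by (simp add: \<sigma>_funpow)
  have "card (Fix \<sigma>) = q"
    using Fix_funpow_frobenius[OF card_q \<open>coprime k n\<close>] card_fixed_power_CHAR[OF card_q]
    by (simp add: \<sigma>_funpow q CHAR)
  then have "card {a. a \<notin> Fix \<sigma>} = p ^ h - q"
    using card card_Diff_subset[of "Fix \<sigma>" UNIV] by (simp add: set_diff_eq)
  then show ?thesis
    using irreducible_iff card_monom_minus_const_set[of n "skew_irreducible \<sigma>"] by simp
qed

end
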